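(* Consider the RSA algorithm run for $N-1$ iterations from $x_1\in X$ with constant stepsizes $\gamma=\dfrac{D_X}{\sqrt{2(M_2^2+L^2)}\sqrt N}$, where $D_X=\max_{x\in X}\|x-x_1\|_2$, and let $g^N=\frac1N\sum_{\tau=1}^Ng(x_\tau,\xi_\tau)$. Let $$K_1(X)=\frac{D_X(M_2^2+2L^2)}{\sqrt{2(M_2^2+L^2)}},\qquad K_2(X)=\frac{D_XM_2^2}{\sqrt{2(M_2^2+L^2)}}+2D_XM_2+M_1.$$ (i) If Assumptions 1, 2, 3 and 4 hold (with $\|\cdot\|_*=\|\cdot\|_2$), then for every $\Theta>0$, $$\mathbb P\Big(|g^N-f(x_* )|>\frac{K_1(X)+\Theta K_2(X)}{\sqrt N}\Big)\le 4\exp\{1\}\exp\{-\Theta\}.$$ (ii) If Assumptions 1, 2, 3 and 5 hold, the same inequality holds with right-hand side replaced by $(3+\exp\{1\})\exp\{-\Theta^2/4\}$.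
   Context: Setting: $E=\mathbb R^n$ with $\|\cdot\|=\|\cdot\|_*=\|\cdot\|_2$; $X\subset E$ nonempty closed bounded convex; $g(x,\xi)$ Borel, convex in $x$, integrable in $\xi$; $f(x)=\mathbb E[g(x,\xi)]$ convex Lipschitz on $X$ with minimizer $x_*$ on $X$; $\xi_1,\xi_2,\dots$ i.i.d. copies of $\xi$; the oracle returns $g(x,\xi_t)$ and a measurable $G(x,\xi_t)\in\partial_xg(x,\xi_t)$; $f'(x):=\mathbb E[G(x,\xi)]$, $\delta(x,\xi)=g(x,\xi)-f(x)$, $\Delta(x,\xi)=G(x,\xi)-f'(x)$. RSA: $x_{t+1}=\Pi_X(x_t-\gamma G(x_t,\xi_t))$, $t=1,\dots,N-1$, $\Pi_X$ Euclidean projection. Assumption 1: $\|f'(x)\|_*\le L$ for all $x\in X$. Assumption 2: $f(x)=\mathbb E[g(x,\xi)]$, $\mathbb E[G(x,\xi)]\in\partial f(x)$. Assumption 3: $\mathbb E[\delta^2(x,\xi)]\le M_1^2$, $\mathbb E[\|\Delta(x,\xi)\|_*^2]\le M_2^2$ for all $x\in X$. Assumption 4: $\mathbb E[\exp\{\delta^2(x,\xi)/M_1^2\}]\le\exp\{1\}$ and $\mathbb E[\exp\{\|\Delta(x,\xi)\|_*^2/M_2^2\}]\le\exp\{1\}$ for all $x\in X$. Assumption 5: $\mathbb E[\exp\{\delta^2(x,\xi)/M_1^2\}]\le\exp\{1\}$ and $\|\Delta(x,\xi)\|_*\le M_2$ almost surely, for all $x\in X$. Here $M_1,M_2\in(0,\infty)$.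 *)

theory Defs
  imports "HOL-Probability.Probability"
begin

definition is_subgradient :: "(real^'n \<Rightarrow> real) \<Rightarrow> real^'n \<Rightarrow> real^'n \<Rightarrow> bool" where
  "is_subgradient h x v \<longleftrightarrow> (\<forall>y. h y \<ge> h x + v \<bullet> (y - x))"

text \<open>RSA iterates: rsa X G gam x1 xi w k is the iterate x_(k+1) of the paper,
  i.e. rsa ... 0 = x_1 and x_(t+1) = Pi_X(x_t - gam G(x_t, xi_t)).\<close>
primrec rsa :: "(real^'n) set \<Rightarrow> (real^'n \<Rightarrow> 'b \<Rightarrow> real^'n) \<Rightarrow> real \<Rightarrow> real^'n
                \<Rightarrow> (nat \<Rightarrow> 'w \<Rightarrow> 'b) \<Rightarrow> 'w \<Rightarrow> nat \<Rightarrow> real^'n" where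
  "rsa X G gam x1 xi w 0 = x1"
| "rsa X G gam x1 xi w (Suc k) =
     closest_point X (rsa X G gam x1 xi w k - gam *\<^sub>R G (rsa X G gam x1 xi w k) (xi (Suc k) w))"

end

theory Submission
  imports Defs
begin

text \<open>
  Write \<open>Sd = \<Sum>\<^sub>t (g(x\<^sub>t,\<xi>\<^sub>t) - f(x\<^sub>t))\<close> for the value noise along the
  trajectory and \<open>Sf = \<Sum>\<^sub>t (f(x\<^sub>t) - f(x\<^sub>*))\<close> for the optimality gap, so that
  \<open>N (g\<^sup>N - f(x\<^sub>*)) = Sd + Sf\<close>.  The classical analysis of the projected subgradient step
  bounds \<open>Sf\<close> deterministically by two further noise sums: the gradient noise in the direction
  \<open>x\<^sub>* - x\<^sub>t\<close> and the sum of squared gradient-noise norms.  Each of the four sums is a sum of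
  increments \<open>\<psi>(x\<^sub>t, \<xi>\<^sub>t)\<close> whose conditional law given the past is that of \<open>\<psi>(x, \<xi>)\<close> with
  \<open>x = x\<^sub>t\<close> frozen; hence conditional moment generating bounds multiply along the path and a
  Chernoff argument bounds each tail.  A union bound over the four events gives the result.
\<close>

text \<open>The elementary inequality behind sub-Gaussian bounds for light-tailed centred variables.\<close>

lemma exp_le_add_exp_square: "exp (y::real) \<le> y + exp (y\<^sup>2)"
proof -
  have e2: "1 + y\<^sup>2 \<le> exp (y\<^sup>2)" using exp_ge_add_one_self by simp
  consider "y > 1" | "0 \<le> y" "y \<le> 1" | "-1 \<le> y" "y < 0" | "y < -1" by linarith
  then show ?thesis
  proof cases
    case 1
    then have "y \<le> y\<^sup>2" by (simp add: power2_eq_square)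
    then have "exp y \<le> exp (y\<^sup>2)" by simp
    then show ?thesis using 1 by linarith
  next
    case 2
    then have "exp y \<le> 1 + y + y\<^sup>2" using exp_bound by simp
    then show ?thesis using e2 by linarith
  next
    case 3
    define u where "u = -y"
    have u: "0 \<le> u" "u \<le> 1" using 3 u_def by auto
    have lower: "1 + u + u\<^sup>2/2 \<le> exp u" using u exp_lower_Taylor_quadratic by simp
    have pos: "0 < 1 + u + u\<^sup>2/2" using u by (simp add: add_pos_nonneg)
    have "(1 - u + u\<^sup>2) * (1 + u + u\<^sup>2/2) = 1 + u\<^sup>2/2 + u^3/2 + u^4/2"
      by (simp add: field_simps power2_eq_square power3_eq_cube power4_eq_xxxx)
    then have prod: "1 \<le> (1 - u + u\<^sup>2) * (1 + u + u\<^sup>2/2)" using u by simp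
    have "exp y = inverse (exp u)" using u_def by (simp add: exp_minus)
    also have "\<dots> \<le> inverse (1 + u + u\<^sup>2/2)" using lower pos by (simp add: le_imp_inverse_le)
    also have "\<dots> \<le> 1 - u + u\<^sup>2" using prod pos by (simp add: field_simps)
    finally have "exp y \<le> 1 + y + y\<^sup>2" using u_def by simp
    then show ?thesis using e2 by linarith
  next
    case 4
    then have "0 \<le> y * (y + 1)" by (intro mult_nonpos_nonpos) auto
    then have "0 \<le> y + y\<^sup>2" by (simp add: algebra_simps power2_eq_square)
    moreover have "exp y \<le> 1" using 4 by simp
    ultimately show ?thesis using e2 by linarith
  qed
qed

text \<open>Compares the two kinds of tail occurring in part (i):
  \<open>exp(-\<Theta>\<^sup>2/4) \<le> e \<cdot> exp(-\<Theta>)\<close>.\<close>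

lemma exp_neg_square_quarter_le: "exp (- \<Theta>\<^sup>2/4) \<le> exp 1 * exp (- (\<Theta>::real))"
proof -
  have "- \<Theta>\<^sup>2/4 \<le> 1 + - \<Theta>"
    using zero_le_power2[of "\<Theta>/2 - 1"] by (simp add: power2_eq_square field_simps)
  then show ?thesis by (simp flip: exp_add)
qed

text \<open>The choice \<open>l = \<Theta>/(2\<sigma>\<surd>n)\<close> in the Chernoff bound for a sum of \<open>n\<close> sub-Gaussian
  increments with parameter \<open>\<sigma>\<close> yields the tail \<open>exp(-\<Theta>\<^sup>2/4)\<close> at level \<open>\<Theta>\<sigma>\<surd>n\<close>.\<close>

lemma subgaussian_chernoff_exponent:
  fixes \<sigma> \<Theta> :: real and n :: nat
  assumes "\<sigma> > 0" "n \<ge> 1"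
  defines "l \<equiv> \<Theta> / (2 * \<sigma> * sqrt n)"
  shows "exp (l\<^sup>2 * \<sigma>\<^sup>2) ^ n * exp (- (l * (\<Theta> * \<sigma> * sqrt n))) = exp (- \<Theta>\<^sup>2/4)"
proof -
  have sn: "sqrt n > 0" "(sqrt n)\<^sup>2 = n" using assms by auto
  have "exp (l\<^sup>2 * \<sigma>\<^sup>2) ^ n = exp (n * (l\<^sup>2 * \<sigma>\<^sup>2))" by (simp add: exp_of_nat_mult)
  also have "n * (l\<^sup>2 * \<sigma>\<^sup>2) = \<Theta>\<^sup>2/4"
    using sn assms by (simp add: l_def power_divide power_mult_distrib field_simps)
  finally have "exp (l\<^sup>2 * \<sigma>\<^sup>2) ^ n = exp (\<Theta>\<^sup>2/4)" .
  moreover have "l * (\<Theta> * \<sigma> * sqrt n) = \<Theta>\<^sup>2/2"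
    using sn assms by (simp add: l_def field_simps power2_eq_square)
  ultimately show ?thesis by (simp flip: exp_add)
qed

context prob_space
begin

text \<open>If \<open>E exp u \<le> e\<close> then \<open>E exp(p u) \<le> e\<^sup>p\<close> for \<open>0 \<le> p \<le> 1\<close> (a Jensen-type interpolation).\<close>

lemma light_tail_power:
  assumes u[measurable]: "u \<in> borel_measurable M"
    and light: "(\<integral>\<^sup>+s. ennreal (exp (u s)) \<partial>M) \<le> ennreal (exp 1)" and p: "0 \<le> p" "p \<le> 1"
  shows "(\<integral>\<^sup>+s. ennreal (exp (p * u s)) \<partial>M) \<le> ennreal (exp p)"
proof -
  have pointwise: "exp (p * u s) \<le> (1 - p) * exp p + (p * exp (p - 1)) * exp (u s)" for s
  proof -
    have "exp ((1 - p) *\<^sub>R 0 + p *\<^sub>R (u s - 1)) \<le> (1 - p) * exp 0 + p * exp (u s - 1)"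
      using convex_onD[OF exp_convex, of p 0 "u s - 1"] p by simp
    then have "exp (p * u s - p) \<le> p * exp (u s - 1) + (1 - p)" by (simp add: algebra_simps)
    then have "exp p * exp (p * u s - p) \<le> exp p * (p * exp (u s - 1) + (1 - p))" by simp
    then show ?thesis by (simp add: algebra_simps flip: exp_add)
  qed
  have "(\<integral>\<^sup>+s. ennreal (exp (p * u s)) \<partial>M) \<le>
        (\<integral>\<^sup>+s. ennreal ((1 - p) * exp p) + ennreal (p * exp (p - 1)) * ennreal (exp (u s)) \<partial>M)"
    using pointwise p by (intro nn_integral_mono) (simp flip: ennreal_plus ennreal_mult)
  also have "\<dots> = ennreal ((1 - p) * exp p) + ennreal (p * exp (p - 1)) * (\<integral>\<^sup>+s. ennreal (exp (u s)) \<partial>M)"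
    by (simp add: nn_integral_add nn_integral_cmult emeasure_space_1)
  also have "\<dots> \<le> ennreal ((1 - p) * exp p) + ennreal (p * exp (p - 1)) * ennreal (exp 1)"
    using light by (intro add_mono mult_left_mono) auto
  also have "\<dots> = ennreal (exp p)"
    using p by (simp flip: ennreal_plus ennreal_mult exp_add add: algebra_simps)
  finally show ?thesis .
qed

lemma light_tail_mgf:
  assumes Y[measurable]: "Y \<in> borel_measurable M" and int: "integrable M Y"
    and mean: "(\<integral>s. Y s \<partial>M) = 0" and \<sigma>: "\<sigma> > 0"
    and light: "(\<integral>\<^sup>+s. ennreal (exp ((Y s)\<^sup>2 / \<sigma>\<^sup>2)) \<partial>M) \<le> ennreal (exp 1)"
  shows "(\<integral>\<^sup>+s. ennreal (exp (l * Y s)) \<partial>M) \<le> ennreal (exp (l\<^sup>2 * \<sigma>\<^sup>2))"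
proof (cases "l\<^sup>2 * \<sigma>\<^sup>2 \<le> 1")
  case True
  define E where "E s = exp ((l * Y s)\<^sup>2)" for s
  have E_eq: "E s = exp ((l\<^sup>2 * \<sigma>\<^sup>2) * ((Y s)\<^sup>2 / \<sigma>\<^sup>2))" for s
    using \<sigma> by (simp add: E_def power_mult_distrib field_simps)
  have E_bound: "(\<integral>\<^sup>+s. ennreal (E s) \<partial>M) \<le> ennreal (exp (l\<^sup>2 * \<sigma>\<^sup>2))"
    unfolding E_eq using True by (intro light_tail_power[OF _ light]) auto
  have E_meas[measurable]: "E \<in> borel_measurable M" unfolding E_def by simp
  have E_int: "integrable M E"
    by (rule integrableI_bounded) (use E_bound in \<open>auto simp: E_def top.not_eq_extremum intro: le_less_trans\<close>)
  have "(\<integral>\<^sup>+s. ennreal (exp (l * Y s)) \<partial>M) \<le> (\<integral>\<^sup>+s. ennreal (l * Y s + E s) \<partial>M)"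
    by (intro nn_integral_mono ennreal_leI) (simp add: E_def exp_le_add_exp_square)
  also have "\<dots> = ennreal (\<integral>s. l * Y s + E s \<partial>M)"
  proof (intro nn_integral_eq_integral AE_I2)
    show "integrable M (\<lambda>s. l * Y s + E s)" using int E_int by auto
    show "0 \<le> l * Y s + E s" for s
      using exp_le_add_exp_square[of "l * Y s"] exp_gt_zero[of "l * Y s"] unfolding E_def by linarith
  qed
  also have "(\<integral>s. l * Y s + E s \<partial>M) = (\<integral>s. E s \<partial>M)"
    using int E_int mean by simp
  also have "ennreal (\<integral>s. E s \<partial>M) = (\<integral>\<^sup>+s. ennreal (E s) \<partial>M)"
    by (rule nn_integral_eq_integral[symmetric]) (use E_int in \<open>auto simp: E_def[abs_def]\<close>)
  finally show ?thesis using E_bound by simp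
next
  case False
  have pointwise: "exp (l * Y s) \<le> exp (l\<^sup>2 * \<sigma>\<^sup>2 / 2) * exp ((1/2) * ((Y s)\<^sup>2 / \<sigma>\<^sup>2))" for s
  proof -
    have "0 \<le> (l * \<sigma> - Y s / \<sigma>)\<^sup>2" by simp
    also have "(l * \<sigma> - Y s / \<sigma>)\<^sup>2 = l\<^sup>2 * \<sigma>\<^sup>2 - 2 * (l * Y s) + (Y s)\<^sup>2 / \<sigma>\<^sup>2"
      using \<sigma> by (simp add: power2_eq_square field_simps)
    finally have "l * Y s \<le> l\<^sup>2 * \<sigma>\<^sup>2 / 2 + (1/2) * ((Y s)\<^sup>2 / \<sigma>\<^sup>2)" by simp
    then show ?thesis by (simp flip: exp_add)
  qed
  have "(\<integral>\<^sup>+s. ennreal (exp (l * Y s)) \<partial>M) \<le>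
      (\<integral>\<^sup>+s. ennreal (exp (l\<^sup>2 * \<sigma>\<^sup>2 / 2)) * ennreal (exp ((1/2) * ((Y s)\<^sup>2 / \<sigma>\<^sup>2))) \<partial>M)"
    using pointwise by (intro nn_integral_mono) (simp flip: ennreal_mult)
  also have "\<dots> = ennreal (exp (l\<^sup>2 * \<sigma>\<^sup>2 / 2)) * (\<integral>\<^sup>+s. ennreal (exp ((1/2) * ((Y s)\<^sup>2 / \<sigma>\<^sup>2))) \<partial>M)"
    by (simp add: nn_integral_cmult)
  also have "\<dots> \<le> ennreal (exp (l\<^sup>2 * \<sigma>\<^sup>2 / 2)) * ennreal (exp (1/2))"
    by (intro mult_left_mono light_tail_power[OF _ light]) auto
  also have "\<dots> \<le> ennreal (exp (l\<^sup>2 * \<sigma>\<^sup>2))"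
    using False by (simp flip: ennreal_mult exp_add)
  finally show ?thesis .
qed

lemma chernoff_bound:
  assumes Z[measurable]: "Z \<in> borel_measurable M"
    and mgf: "(\<integral>\<^sup>+\<omega>. ennreal (exp (Z \<omega>)) \<partial>M) \<le> ennreal C" and C: "0 \<le> C"
  shows "prob {\<omega> \<in> space M. Z \<omega> > b} \<le> C * exp (- b)"
proof -
  have "emeasure M {\<omega> \<in> space M. Z \<omega> > b} \<le> emeasure M {\<omega> \<in> space M. Z \<omega> \<ge> b}"
    by (intro emeasure_mono) auto
  also have "\<dots> \<le> ennreal (exp (- b)) * (\<integral>\<^sup>+\<omega>. ennreal (exp (Z \<omega>)) * indicator (space M) \<omega> \<partial>M)"
    using Chernoff_ineq_nn_integral_ge[of 1 "space M" M Z b] by simp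
  also have "(\<integral>\<^sup>+\<omega>. ennreal (exp (Z \<omega>)) * indicator (space M) \<omega> \<partial>M) = (\<integral>\<^sup>+\<omega>. ennreal (exp (Z \<omega>)) \<partial>M)"
    by (intro nn_integral_cong) auto
  also have "ennreal (exp (- b)) * \<dots> \<le> ennreal (exp (- b)) * ennreal C"
    using mgf by (intro mult_left_mono) auto
  finally show ?thesis
    using C by (simp add: emeasure_eq_measure mult.commute flip: ennreal_mult)
qed

end

lemma norm_diff_scaleR_square:
  fixes u v :: "'a::real_inner"
  shows "(norm (u - r *\<^sub>R v))\<^sup>2 = (norm u)\<^sup>2 - 2 * r * (v \<bullet> u) + r\<^sup>2 * (norm v)\<^sup>2"
  unfolding power2_norm_eq_inner
  by (simp add: inner_diff_left inner_diff_right inner_commute power2_eq_square algebra_simps)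

text \<open>One projected step towards a point \<open>z\<close> of the feasible set: the projection is
  non-expansive and fixes \<open>z\<close>.\<close>

lemma projected_step_descent:
  fixes y v z :: "'a::euclidean_space"
  assumes X: "closed X" "convex X" "X \<noteq> {}" and z: "z \<in> X"
  shows "(norm (closest_point X (y - \<gamma> *\<^sub>R v) - z))\<^sup>2
           \<le> (norm (y - z))\<^sup>2 - 2 * \<gamma> * (v \<bullet> (y - z)) + \<gamma>\<^sup>2 * (norm v)\<^sup>2"
proof -
  have "norm (closest_point X (y - \<gamma> *\<^sub>R v) - z) \<le> norm ((y - z) - \<gamma> *\<^sub>R v)"
    using closest_point_lipschitz[OF X(2,1,3), of "y - \<gamma> *\<^sub>R v" z]
    by (simp add: closest_point_self[OF z] dist_norm algebra_simps)
  then have "(norm (closest_point X (y - \<gamma> *\<^sub>R v) - z))\<^sup>2 \<le> (norm ((y - z) - \<gamma> *\<^sub>R v))\<^sup>2"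
    by (simp add: power_mono)
  then show ?thesis by (simp add: norm_diff_scaleR_square)
qed

text \<open>Telescoping the descent inequality over \<open>N\<close> projected steps with directions \<open>v k\<close>.\<close>

lemma projected_subgradient_regret:
  fixes y v :: "nat \<Rightarrow> 'a::euclidean_space"
  assumes X: "closed X" "convex X" "X \<noteq> {}" and z: "z \<in> X" and \<gamma>: "\<gamma> > 0"
    and step: "\<And>k. y (Suc k) = closest_point X (y k - \<gamma> *\<^sub>R v k)"
  shows "(\<Sum>k<N. v k \<bullet> (y k - z)) \<le> (norm (y 0 - z))\<^sup>2 / (2 * \<gamma>) + \<gamma> / 2 * (\<Sum>k<N. (norm (v k))\<^sup>2)"
proof -
  define a where "a k = (norm (y k - z))\<^sup>2" for k
  have "v k \<bullet> (y k - z) \<le> (a k - a (Suc k)) / (2 * \<gamma>) + \<gamma> / 2 * (norm (v k))\<^sup>2" for k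
    using projected_step_descent[OF X z, of "y k" \<gamma> "v k"] \<gamma>
    by (simp add: a_def step field_simps power2_eq_square)
  then have "(\<Sum>k<N. v k \<bullet> (y k - z)) \<le> (\<Sum>k<N. (a k - a (Suc k)) / (2 * \<gamma>) + \<gamma> / 2 * (norm (v k))\<^sup>2)"
    by (intro sum_mono)
  also have "\<dots> = (a 0 - a N) / (2 * \<gamma>) + \<gamma> / 2 * (\<Sum>k<N. (norm (v k))\<^sup>2)"
    by (simp add: sum.distrib sum_divide_distrib[symmetric] sum_distrib_left sum_lessThan_telescope')
  also have "\<dots> \<le> a 0 / (2 * \<gamma>) + \<gamma> / 2 * (\<Sum>k<N. (norm (v k))\<^sup>2)"
    using \<gamma> by (simp add: a_def divide_right_mono)
  finally show ?thesis by (simp add: a_def)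
qed

text \<open>The \<open>k\<close>-th RSA iterate as a function of a sample history \<open>h\<close> (with \<open>h i\<close> playing
  the role of \<open>\<xi>\<^sub>i\<close>); it depends only on \<open>h 1, \<dots>, h k\<close>.\<close>

definition rsa_hist :: "(real^'n) set \<Rightarrow> (real^'n \<Rightarrow> 'b \<Rightarrow> real^'n) \<Rightarrow> real \<Rightarrow> real^'n
                        \<Rightarrow> nat \<Rightarrow> (nat \<Rightarrow> 'b) \<Rightarrow> real^'n" where
  "rsa_hist X G gam x1 k h = rsa X G gam x1 (\<lambda>i (_::unit). h i) () k"

lemma rsa_in_set: "closed X \<Longrightarrow> X \<noteq> {} \<Longrightarrow> x1 \<in> X \<Longrightarrow> rsa X G gam x1 \<xi> \<omega> k \<in> X"
  by (cases k) (auto simp: closest_point_in_set)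

lemma rsa_eq_rsa_hist:
  "k \<le> n \<Longrightarrow> rsa X G gam x1 \<xi> \<omega> k = rsa_hist X G gam x1 k (restrict (\<lambda>i. \<xi> i \<omega>) {1..n})"
  by (induction k) (auto simp: rsa_hist_def)

text \<open>Iterates are measurable functions of the history, since the projection is continuous.\<close>

lemma rsa_hist_measurable:
  assumes G_meas: "(\<lambda>(x, s). G x s) \<in> borel_measurable (borel \<Otimes>\<^sub>M S)"
    and X: "closed X" "convex X" "X \<noteq> {}" and k: "k \<le> n"
  shows "rsa_hist X G gam x1 k \<in> borel_measurable (PiM {1..n} (\<lambda>_. S))"
  using k
proof (induction k)
  case 0
  then show ?case by (simp add: rsa_hist_def)
next
  case (Suc k)
  have proj_meas: "closest_point X \<in> borel_measurable borel"
    by (intro borel_measurable_continuous_onI continuous_on_closest_point X)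
  have IH: "rsa_hist X G gam x1 k \<in> borel_measurable (PiM {1..n} (\<lambda>_. S))" using Suc by simp
  have sample: "(\<lambda>h. h (Suc k)) \<in> measurable (PiM {1..n} (\<lambda>_. S)) S"
    using Suc.prems by (intro measurable_component_singleton) auto
  have "(\<lambda>h. G (rsa_hist X G gam x1 k h) (h (Suc k))) \<in> borel_measurable (PiM {1..n} (\<lambda>_. S))"
    using measurable_compose[OF measurable_Pair[OF IH sample] G_meas] by simp
  then have "(\<lambda>h. rsa_hist X G gam x1 k h - gam *\<^sub>R G (rsa_hist X G gam x1 k h) (h (Suc k)))
               \<in> borel_measurable (PiM {1..n} (\<lambda>_. S))"
    using IH by measurable
  from measurable_compose[OF this proj_meas] show ?case by (simp add: rsa_hist_def)
qed

locale rsa_sampling = prob_space M for M :: "'w measure" +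
  fixes S :: "'b measure" and P :: "'b measure" and \<xi> :: "nat \<Rightarrow> 'w \<Rightarrow> 'b"
    and X :: "(real^'n) set" and G :: "real^'n \<Rightarrow> 'b \<Rightarrow> real^'n" and x1 :: "real^'n" and gam :: real
  assumes \<xi>_meas: "\<And>t. t \<ge> 1 \<Longrightarrow> \<xi> t \<in> measurable M S"
    and \<xi>_distr: "\<And>t. t \<ge> 1 \<Longrightarrow> distr M S (\<xi> t) = P"
    and \<xi>_indep: "indep_vars (\<lambda>_. S) \<xi> {1..}"
    and X_closed: "closed X" and X_convex: "convex X" and X_nonempty: "X \<noteq> {}"
    and x1_in: "x1 \<in> X"
    and G_meas: "(\<lambda>(x, s). G x s) \<in> borel_measurable (borel \<Otimes>\<^sub>M S)"
begin

definition hist :: "nat \<Rightarrow> 'w \<Rightarrow> nat \<Rightarrow> 'b" where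
  "hist n \<omega> = restrict (\<lambda>i. \<xi> i \<omega>) {1..n}"

definition hist_sum :: "(real^'n \<Rightarrow> 'b \<Rightarrow> real) \<Rightarrow> nat \<Rightarrow> (nat \<Rightarrow> 'b) \<Rightarrow> real" where
  "hist_sum \<psi> n h = (\<Sum>t=1..n. \<psi> (rsa_hist X G gam x1 (t - 1) h) (h t))"

definition path_sum :: "(real^'n \<Rightarrow> 'b \<Rightarrow> real) \<Rightarrow> nat \<Rightarrow> 'w \<Rightarrow> real" where
  "path_sum \<psi> n \<omega> = (\<Sum>t=1..n. \<psi> (rsa X G gam x1 \<xi> \<omega> (t - 1)) (\<xi> t \<omega>))"

lemma iterate_in_X: "rsa X G gam x1 \<xi> \<omega> k \<in> X"
  using rsa_in_set[OF X_closed X_nonempty x1_in] .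

lemma hist_measurable: "hist n \<in> measurable M (PiM {1..n} (\<lambda>_. S))"
  unfolding hist_def by (intro measurable_restrict \<xi>_meas) auto

lemma path_sum_eq_hist_sum: "path_sum \<psi> n \<omega> = hist_sum \<psi> n (hist n \<omega>)"
  unfolding path_sum_def hist_sum_def
  by (intro sum.cong refl) (auto simp: hist_def rsa_eq_rsa_hist[of _ n])

lemma hist_sum_measurable:
  assumes \<psi>_meas: "(\<lambda>(x, s). \<psi> x s) \<in> borel_measurable (borel \<Otimes>\<^sub>M S)"
  shows "hist_sum \<psi> n \<in> borel_measurable (PiM {1..n} (\<lambda>_. S))"
proof -
  have "(\<lambda>h. \<psi> (rsa_hist X G gam x1 (t - 1) h) (h t)) \<in> borel_measurable (PiM {1..n} (\<lambda>_. S))"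
    if t: "t \<in> {1..n}" for t
  proof -
    have sample: "(\<lambda>h. h t) \<in> measurable (PiM {1..n} (\<lambda>_. S)) S"
      using t by (intro measurable_component_singleton) auto
    have "rsa_hist X G gam x1 (t - 1) \<in> borel_measurable (PiM {1..n} (\<lambda>_. S))"
      using t by (intro rsa_hist_measurable G_meas X_closed X_convex X_nonempty) auto
    from measurable_compose[OF measurable_Pair[OF this sample] \<psi>_meas] show ?thesis by simp
  qed
  then show ?thesis unfolding hist_sum_def[abs_def] by (intro borel_measurable_sum) auto
qed

lemma path_sum_measurable:
  assumes "(\<lambda>(x, s). \<psi> x s) \<in> borel_measurable (borel \<Otimes>\<^sub>M S)"
  shows "path_sum \<psi> n \<in> borel_measurable M"
  using measurable_compose[OF hist_measurable hist_sum_measurable[OF assms]]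
  by (simp add: path_sum_eq_hist_sum[abs_def])

lemma prob_space_P: "prob_space P"
  using \<xi>_distr[of 1] prob_space_distr[OF \<xi>_meas[of 1]] by simp

sublocale P: prob_space P
  by (rule prob_space_P)

lemma sets_P: "sets P = sets S"
  using \<xi>_distr[of 1] by (metis order_refl sets_distr)

lemma section_measurable:
  assumes "(\<lambda>(x, s). \<psi> x s) \<in> borel_measurable (borel \<Otimes>\<^sub>M S)"
  shows "\<psi> x \<in> borel_measurable P"
  using measurable_compose[OF measurable_Pair1'[of x borel S] assms]
  by (simp add: measurable_cong_sets[OF sets_P refl])

text \<open>Conditioning on the history: the next sample is independent of it and has law \<open>P\<close>,
  so it can be integrated out with the history frozen.\<close>

lemma nn_integral_next_sample:
  assumes \<Phi>_meas: "(\<lambda>(h, s). \<Phi> h s) \<in> borel_measurable (PiM {1..n} (\<lambda>_. S) \<Otimes>\<^sub>M S)"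
  shows "(\<integral>\<^sup>+\<omega>. \<Phi> (hist n \<omega>) (\<xi> (Suc n) \<omega>) \<partial>M)
           = (\<integral>\<^sup>+h. (\<integral>\<^sup>+s. \<Phi> h s \<partial>P) \<partial>distr M (PiM {1..n} (\<lambda>_. S)) (hist n))"
proof -
  let ?H = "PiM {1..n} (\<lambda>_. S)" and ?R = "PiM {Suc n} (\<lambda>_. S)"
  define R where "R \<omega> = restrict (\<lambda>i. \<xi> i \<omega>) {Suc n}" for \<omega>
  define D where "D = distr M ?H (hist n)"
  define Q where "Q = distr M ?R R"
  define \<Phi>' where "\<Phi>' = (\<lambda>(h, r). \<Phi> h (r (Suc n)))"
  have R_meas: "R \<in> measurable M ?R"
    unfolding R_def by (intro measurable_restrict \<xi>_meas) auto
  have proj: "(\<lambda>r. r (Suc n)) \<in> measurable ?R S"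
    by (intro measurable_component_singleton) auto
  have \<Phi>'_meas: "\<Phi>' \<in> borel_measurable (?H \<Otimes>\<^sub>M ?R)"
  proof -
    have "(\<lambda>z. (fst z, snd z (Suc n))) \<in> measurable (?H \<Otimes>\<^sub>M ?R) (?H \<Otimes>\<^sub>M S)"
      by (intro measurable_Pair measurable_fst measurable_compose[OF measurable_snd proj])
    from measurable_compose[OF this \<Phi>_meas] show ?thesis by (simp add: \<Phi>'_def case_prod_beta')
  qed
  have "indep_var ?H (hist n) ?R R"
    unfolding hist_def[abs_def] R_def[abs_def] by (intro indep_var_restrict[OF \<xi>_indep]) auto
  then have joint: "distr M (?H \<Otimes>\<^sub>M ?R) (\<lambda>\<omega>. (hist n \<omega>, R \<omega>)) = D \<Otimes>\<^sub>M Q"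
    unfolding D_def Q_def by (simp add: indep_var_distribution_eq)
  interpret Q: prob_space Q
    unfolding Q_def by (intro prob_space_distr R_meas)
  have QP: "distr Q S (\<lambda>r. r (Suc n)) = P"
    unfolding Q_def using R_meas proj \<xi>_distr[of "Suc n"]
    by (subst distr_distr) (auto simp: R_def comp_def)
  have "(\<integral>\<^sup>+\<omega>. \<Phi> (hist n \<omega>) (\<xi> (Suc n) \<omega>) \<partial>M) = (\<integral>\<^sup>+\<omega>. \<Phi>' (hist n \<omega>, R \<omega>) \<partial>M)"
    by (simp add: \<Phi>'_def R_def)
  also have "\<dots> = (\<integral>\<^sup>+z. \<Phi>' z \<partial>distr M (?H \<Otimes>\<^sub>M ?R) (\<lambda>\<omega>. (hist n \<omega>, R \<omega>)))"
    using \<Phi>'_meas by (intro nn_integral_distr[symmetric] measurable_Pair hist_measurable R_meas) simp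
  also have "\<dots> = (\<integral>\<^sup>+h. \<integral>\<^sup>+r. \<Phi>' (h, r) \<partial>Q \<partial>D)"
    unfolding joint using \<Phi>'_meas
    by (intro Q.nn_integral_fst[symmetric], subst measurable_cong_sets[OF sets_pair_measure_cong])
       (auto simp: D_def Q_def)
  also have "\<dots> = (\<integral>\<^sup>+h. \<integral>\<^sup>+s. \<Phi> h s \<partial>P \<partial>D)"
  proof (intro nn_integral_cong)
    fix h assume "h \<in> space D"
    then have "(\<lambda>s. \<Phi> h s) \<in> borel_measurable S"
      using measurable_compose[OF measurable_Pair1'[of h ?H S] \<Phi>_meas] by (simp add: D_def)
    then show "(\<integral>\<^sup>+r. \<Phi>' (h, r) \<partial>Q) = (\<integral>\<^sup>+s. \<Phi> h s \<partial>P)"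
      unfolding QP[symmetric] using proj by (subst nn_integral_distr) (auto simp: \<Phi>'_def Q_def)
  qed
  finally show ?thesis unfolding D_def .
qed


lemma path_sum_mgf:
  assumes \<psi>_meas: "(\<lambda>(x, s). \<psi> x s) \<in> borel_measurable (borel \<Otimes>\<^sub>M S)"
    and mgf: "\<And>x. x \<in> X \<Longrightarrow> (\<integral>\<^sup>+s. ennreal (exp (\<psi> x s)) \<partial>P) \<le> ennreal C"
  shows "(\<integral>\<^sup>+\<omega>. ennreal (exp (path_sum \<psi> n \<omega>)) \<partial>M) \<le> ennreal C ^ n"
proof (induction n)
  case 0
  then show ?case by (simp add: path_sum_def emeasure_space_1)
next
  case (Suc n)
  let ?H = "PiM {1..n} (\<lambda>_. S)"
  define y where "y h = rsa_hist X G gam x1 n h" for h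
  define \<Phi> where "\<Phi> h s = ennreal (exp (hist_sum \<psi> n h)) * ennreal (exp (\<psi> (y h) s))" for h s
  have y_meas: "y \<in> borel_measurable ?H"
    unfolding y_def[abs_def] by (intro rsa_hist_measurable G_meas X_closed X_convex X_nonempty) simp
  have "(\<lambda>z. \<psi> (y (fst z)) (snd z)) \<in> borel_measurable (?H \<Otimes>\<^sub>M S)"
    using measurable_compose[OF measurable_Pair[OF measurable_compose[OF measurable_fst y_meas]
          measurable_snd] \<psi>_meas] by simp
  moreover have "(\<lambda>z. hist_sum \<psi> n (fst z)) \<in> borel_measurable (?H \<Otimes>\<^sub>M S)"
    by (rule measurable_compose[OF measurable_fst hist_sum_measurable[OF \<psi>_meas]])
  ultimately have \<Phi>_meas: "(\<lambda>(h, s). \<Phi> h s) \<in> borel_measurable (?H \<Otimes>\<^sub>M S)"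
    unfolding \<Phi>_def by (simp add: case_prod_beta')
  have split_last: "path_sum \<psi> (Suc n) \<omega> = hist_sum \<psi> n (hist n \<omega>) + \<psi> (y (hist n \<omega>)) (\<xi> (Suc n) \<omega>)" for \<omega>
  proof -
    have "path_sum \<psi> (Suc n) \<omega> = path_sum \<psi> n \<omega> + \<psi> (rsa X G gam x1 \<xi> \<omega> n) (\<xi> (Suc n) \<omega>)"
      by (simp add: path_sum_def)
    then show ?thesis
      by (simp add: path_sum_eq_hist_sum y_def hist_def rsa_eq_rsa_hist[of n n])
  qed
  have "(\<integral>\<^sup>+\<omega>. ennreal (exp (path_sum \<psi> (Suc n) \<omega>)) \<partial>M) = (\<integral>\<^sup>+\<omega>. \<Phi> (hist n \<omega>) (\<xi> (Suc n) \<omega>) \<partial>M)"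
    by (simp add: split_last \<Phi>_def exp_add ennreal_mult)
  also have "\<dots> = (\<integral>\<^sup>+h. (\<integral>\<^sup>+s. \<Phi> h s \<partial>P) \<partial>distr M ?H (hist n))"
    by (rule nn_integral_next_sample[OF \<Phi>_meas])
  also have "\<dots> \<le> (\<integral>\<^sup>+h. ennreal (exp (hist_sum \<psi> n h)) * ennreal C \<partial>distr M ?H (hist n))"
  proof (intro nn_integral_mono)
    fix h
    have "(\<integral>\<^sup>+s. \<Phi> h s \<partial>P) = ennreal (exp (hist_sum \<psi> n h)) * (\<integral>\<^sup>+s. ennreal (exp (\<psi> (y h) s)) \<partial>P)"
      unfolding \<Phi>_def using section_measurable[OF \<psi>_meas] by (simp add: nn_integral_cmult)
    also have "\<dots> \<le> ennreal (exp (hist_sum \<psi> n h)) * ennreal C"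
      by (intro mult_left_mono mgf) (simp_all add: y_def rsa_hist_def rsa_in_set X_closed X_nonempty x1_in)
    finally show "(\<integral>\<^sup>+s. \<Phi> h s \<partial>P) \<le> ennreal (exp (hist_sum \<psi> n h)) * ennreal C" .
  qed
  also have "\<dots> = (\<integral>\<^sup>+\<omega>. ennreal (exp (path_sum \<psi> n \<omega>)) \<partial>M) * ennreal C"
    using hist_sum_measurable[OF \<psi>_meas] hist_measurable
    by (simp add: nn_integral_distr nn_integral_multc path_sum_eq_hist_sum)
  also have "\<dots> \<le> ennreal C ^ n * ennreal C"
    by (intro mult_right_mono Suc.IH) auto
  finally show ?case by (simp add: mult.commute)
qed

lemma path_sum_chernoff:
  assumes \<psi>_meas: "(\<lambda>(x, s). \<psi> x s) \<in> borel_measurable (borel \<Otimes>\<^sub>M S)"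
    and mgf: "\<And>x. x \<in> X \<Longrightarrow> (\<integral>\<^sup>+s. ennreal (exp (\<psi> x s)) \<partial>P) \<le> ennreal C" and C: "0 \<le> C"
  shows "prob {\<omega> \<in> space M. path_sum \<psi> n \<omega> > b} \<le> C ^ n * exp (- b)"
proof (rule chernoff_bound)
  show "path_sum \<psi> n \<in> borel_measurable M" by (rule path_sum_measurable[OF \<psi>_meas])
  have "(\<integral>\<^sup>+\<omega>. ennreal (exp (path_sum \<psi> n \<omega>)) \<partial>M) \<le> ennreal C ^ n"
    by (rule path_sum_mgf[OF \<psi>_meas mgf])
  then show "(\<integral>\<^sup>+\<omega>. ennreal (exp (path_sum \<psi> n \<omega>)) \<partial>M) \<le> ennreal (C ^ n)"
    using C by (simp add: ennreal_power)
qed (use C in simp)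

lemma path_sum_event:
  assumes "(\<lambda>(x, s). \<psi> x s) \<in> borel_measurable (borel \<Otimes>\<^sub>M S)"
  shows "{\<omega> \<in> space M. path_sum \<psi> n \<omega> > b} \<in> events"
  using path_sum_measurable[OF assms] by measurable

lemma path_sum_lessThan:
  "path_sum \<psi> n \<omega> = (\<Sum>k<n. \<psi> (rsa X G gam x1 \<xi> \<omega> k) (\<xi> (Suc k) \<omega>))"
  using sum_bounds_lt_plus1[of "\<lambda>t. \<psi> (rsa X G gam x1 \<xi> \<omega> (t - 1)) (\<xi> t \<omega>)" n]
  by (simp add: path_sum_def)

lemma path_sum_scale: "path_sum (\<lambda>x s. c * \<psi> x s) n \<omega> = c * path_sum \<psi> n \<omega>"
  by (simp add: path_sum_def sum_distrib_left)

lemma path_sum_subgaussian_tail: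
  assumes \<psi>_meas: "(\<lambda>(x, s). \<psi> x s) \<in> borel_measurable (borel \<Otimes>\<^sub>M S)"
    and mgf: "\<And>x l. x \<in> X \<Longrightarrow> (\<integral>\<^sup>+s. ennreal (exp (l * \<psi> x s)) \<partial>P) \<le> ennreal (exp (l\<^sup>2 * \<sigma>\<^sup>2))"
    and \<sigma>: "\<sigma> > 0" and \<Theta>: "\<Theta> > 0" and n: "n \<ge> 1"
  shows "prob {\<omega> \<in> space M. path_sum \<psi> n \<omega> > \<Theta> * \<sigma> * sqrt n} \<le> exp (- \<Theta>\<^sup>2/4)"
proof -
  define l where "l = \<Theta> / (2 * \<sigma> * sqrt n)"
  have l: "l > 0" using \<sigma> \<Theta> n by (simp add: l_def)
  have "{\<omega> \<in> space M. path_sum \<psi> n \<omega> > \<Theta> * \<sigma> * sqrt n}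
      = {\<omega> \<in> space M. path_sum (\<lambda>x s. l * \<psi> x s) n \<omega> > l * (\<Theta> * \<sigma> * sqrt n)}"
    using l by (simp add: path_sum_scale mult.assoc)
  also have "prob \<dots> \<le> exp (l\<^sup>2 * \<sigma>\<^sup>2) ^ n * exp (- (l * (\<Theta> * \<sigma> * sqrt n)))"
    using \<psi>_meas mgf by (intro path_sum_chernoff) auto
  also have "\<dots> = exp (- \<Theta>\<^sup>2/4)"
    unfolding l_def using \<sigma> n by (rule subgaussian_chernoff_exponent)
  finally show ?thesis .
qed

lemma path_sum_light_tail:
  assumes \<phi>_meas: "(\<lambda>(x, s). \<phi> x s) \<in> borel_measurable (borel \<Otimes>\<^sub>M S)"
    and light: "\<And>x. x \<in> X \<Longrightarrow> (\<integral>\<^sup>+s. ennreal (exp (\<phi> x s)) \<partial>P) \<le> ennreal (exp 1)"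
    and n: "n \<ge> 1"
  shows "prob {\<omega> \<in> space M. path_sum \<phi> n \<omega> > n * \<Theta>} \<le> exp 1 * exp (- \<Theta>)"
proof -
  have "{\<omega> \<in> space M. path_sum \<phi> n \<omega> > n * \<Theta>} = {\<omega> \<in> space M. path_sum (\<lambda>x s. (1 / n) * \<phi> x s) n \<omega> > \<Theta>}"
    unfolding path_sum_scale using n by (auto simp: field_simps)
  also have "prob \<dots> \<le> exp (1 / n) ^ n * exp (- \<Theta>)"
    using \<phi>_meas n by (intro path_sum_chernoff P.light_tail_power[OF section_measurable light]) auto
  also have "exp (1 / n) ^ n = exp 1"
    using n by (simp flip: exp_of_nat_mult)
  finally show ?thesis .
qed

lemma path_sum_bounded_tail:
  assumes \<phi>_meas: "(\<lambda>(x, s). \<phi> x s) \<in> borel_measurable (borel \<Otimes>\<^sub>M S)"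
    and bounded: "\<And>x. x \<in> X \<Longrightarrow> AE s in P. \<phi> x s \<le> 1"
    and n: "n \<ge> 1" and b: "b > (1::real)"
  shows "prob {\<omega> \<in> space M. path_sum \<phi> n \<omega> > n * b} = 0"
proof -
  let ?E = "{\<omega> \<in> space M. path_sum \<phi> n \<omega> > n * b}"
  define \<kappa> where "\<kappa> = n * (b - 1)"
  have \<kappa>: "\<kappa> > 0" using n b by (simp add: \<kappa>_def)
  have tail: "prob ?E \<le> exp (- (l * \<kappa>))" if l: "l > 0" for l :: real
  proof -
    have mgf: "(\<integral>\<^sup>+s. ennreal (exp (l * \<phi> x s)) \<partial>P) \<le> ennreal (exp l)" if x: "x \<in> X" for x
    proof -
      have "(\<integral>\<^sup>+s. ennreal (exp (l * \<phi> x s)) \<partial>P) \<le> (\<integral>\<^sup>+s. ennreal (exp l) \<partial>P)"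
        using bounded[OF x] l by (intro nn_integral_mono_AE) (auto elim!: eventually_mono)
      then show ?thesis by (simp add: P.emeasure_space_1)
    qed
    have "?E = {\<omega> \<in> space M. path_sum (\<lambda>x s. l * \<phi> x s) n \<omega> > l * (n * b)}"
      using l by (simp add: path_sum_scale)
    also have "prob \<dots> \<le> exp l ^ n * exp (- (l * (n * b)))"
      using \<phi>_meas mgf by (intro path_sum_chernoff) auto
    also have "\<dots> = exp (- (l * \<kappa>))"
      by (simp add: \<kappa>_def algebra_simps flip: exp_of_nat_mult exp_add)
    finally show ?thesis .
  qed
  show ?thesis
  proof (rule ccontr)
    assume "prob ?E \<noteq> 0"
    then have p: "prob ?E > 0" using measure_nonneg[of M ?E] by linarith
    have "prob ?E < 2" using prob_le_1[of ?E] by linarith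
    then have "ln (prob ?E) < ln 2" using p by simp
    define l where "l = (ln 2 - ln (prob ?E)) / \<kappa>"
    have "l > 0" using \<kappa> \<open>ln (prob ?E) < ln 2\<close> by (simp add: l_def)
    have "exp (- (l * \<kappa>)) = exp (ln (prob ?E) - ln 2)" using \<kappa> by (simp add: l_def)
    also have "\<dots> = prob ?E / 2" using p by (simp add: exp_diff)
    finally show False using tail[OF \<open>l > 0\<close>] p by linarith
  qed
qed

end

lemma projected_subgradient_gap:
  fixes y v :: "nat \<Rightarrow> 'a::euclidean_space" and Gb :: "'a \<Rightarrow> 'a" and f :: "'a \<Rightarrow> real"
  assumes X: "closed X" "convex X" "X \<noteq> {}" and z: "z \<in> X" and \<gamma>: "\<gamma> > 0"
    and y0: "y 0 \<in> X" and step: "\<And>k. y (Suc k) = closest_point X (y k - \<gamma> *\<^sub>R v k)"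
    and diam: "\<And>x. x \<in> X \<Longrightarrow> norm (x - y 0) \<le> D"
    and subgrad: "\<And>x. x \<in> X \<Longrightarrow> f z \<ge> f x + Gb x \<bullet> (z - x)"
    and bound: "\<And>x. x \<in> X \<Longrightarrow> norm (Gb x) \<le> L"
  shows "(\<Sum>k<N. f (y k) - f z) \<le> D\<^sup>2 / (2 * \<gamma>) + \<gamma> * N * L\<^sup>2
           + \<gamma> * (\<Sum>k<N. (norm (v k - Gb (y k)))\<^sup>2) + (\<Sum>k<N. (v k - Gb (y k)) \<bullet> (z - y k))"
proof -
  define \<Delta> where "\<Delta> k = v k - Gb (y k)" for k
  have y_in: "y k \<in> X" for k
    by (cases k) (auto simp: y0 step closest_point_in_set X)
  have gap: "f (y k) - f z \<le> v k \<bullet> (y k - z) + \<Delta> k \<bullet> (z - y k)" for k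
  proof -
    have "f (y k) - f z \<le> Gb (y k) \<bullet> (y k - z)"
      using subgrad[OF y_in[of k]] by (simp add: inner_diff_right)
    also have "Gb (y k) = v k - \<Delta> k" by (simp add: \<Delta>_def)
    finally show ?thesis by (simp add: inner_diff_left inner_diff_right inner_commute)
  qed
  have v_sq: "(norm (v k))\<^sup>2 \<le> 2 * L\<^sup>2 + 2 * (norm (\<Delta> k))\<^sup>2" for k
  proof -
    have "norm (v k) \<le> norm (Gb (y k)) + norm (\<Delta> k)"
      using norm_triangle_ineq[of "Gb (y k)" "\<Delta> k"] by (simp add: \<Delta>_def)
    also have "\<dots> \<le> L + norm (\<Delta> k)" using bound[OF y_in] by simp
    finally have "(norm (v k))\<^sup>2 \<le> (L + norm (\<Delta> k))\<^sup>2" by (simp add: power_mono)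
    also have "\<dots> \<le> 2 * L\<^sup>2 + 2 * (norm (\<Delta> k))\<^sup>2"
      using sum_squares_ge_zero[of "L - norm (\<Delta> k)" 0] by (simp add: power2_eq_square algebra_simps)
    finally show ?thesis .
  qed
  have start: "(norm (y 0 - z))\<^sup>2 \<le> D\<^sup>2"
    using diam[OF z] norm_ge_zero[of "z - y 0"] by (simp add: norm_minus_commute power_mono)
  have "(\<Sum>k<N. f (y k) - f z) \<le> (\<Sum>k<N. v k \<bullet> (y k - z)) + (\<Sum>k<N. \<Delta> k \<bullet> (z - y k))"
    unfolding sum.distrib[symmetric] by (intro sum_mono gap)
  also have "(\<Sum>k<N. v k \<bullet> (y k - z)) \<le> (norm (y 0 - z))\<^sup>2 / (2 * \<gamma>) + \<gamma> / 2 * (\<Sum>k<N. (norm (v k))\<^sup>2)"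
    using projected_subgradient_regret[OF X z \<gamma>] step by blast
  also have "\<dots> \<le> D\<^sup>2 / (2 * \<gamma>) + \<gamma> / 2 * (\<Sum>k<N. 2 * L\<^sup>2 + 2 * (norm (\<Delta> k))\<^sup>2)"
    using \<gamma> start by (intro add_mono mult_left_mono sum_mono v_sq divide_right_mono) auto
  also have "\<dots> = D\<^sup>2 / (2 * \<gamma>) + \<gamma> * N * L\<^sup>2 + \<gamma> * (\<Sum>k<N. (norm (\<Delta> k))\<^sup>2)"
    by (simp add: sum.distrib sum_distrib_left[symmetric] algebra_simps)
  finally show ?thesis by (simp add: \<Delta>_def)
qed

text \<open>The constant stepsize of the proposition balances the terms of the gap bound.\<close>

lemma stepsize_balance:
  fixes D M2 L \<Theta> c \<gamma> :: real and N :: nat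
  assumes D: "D > 0" and M2: "M2 > 0" and N: "N \<ge> 1"
  defines "c \<equiv> sqrt (2 * (M2\<^sup>2 + L\<^sup>2))"
  defines "\<gamma> \<equiv> D / (c * sqrt N)"
  shows "D\<^sup>2 / (2 * \<gamma>) + \<gamma> * N * L\<^sup>2 + \<gamma> * (N * \<Theta> * M2\<^sup>2)
           = sqrt N * (D * (M2\<^sup>2 + 2 * L\<^sup>2) / c + \<Theta> * (D * M2\<^sup>2 / c))"
proof -
  have c: "c > 0" "c\<^sup>2 = 2 * (M2\<^sup>2 + L\<^sup>2)"
    using M2 by (simp_all add: c_def add_pos_nonneg)
  have sN: "sqrt N > 0" "N = (sqrt N)\<^sup>2" using N by auto
  have "D\<^sup>2 / (2 * \<gamma>) = sqrt N * (D * c\<^sup>2 / (2 * c))"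
    using D c(1) sN by (simp add: \<gamma>_def field_simps power2_eq_square)
  also have "\<dots> = sqrt N * (D * (M2\<^sup>2 + L\<^sup>2) / c)"
    unfolding c(2) using c by (simp add: field_simps)
  finally have first: "D\<^sup>2 / (2 * \<gamma>) = sqrt N * (D * (M2\<^sup>2 + L\<^sup>2) / c)" .
  have "\<gamma> * N * L\<^sup>2 + \<gamma> * (N * \<Theta> * M2\<^sup>2) = sqrt N * (D * L\<^sup>2 / c + \<Theta> * (D * M2\<^sup>2 / c))"
    using c sN by (subst (1 2) sN(2)) (simp add: \<gamma>_def field_simps power2_eq_square)
  moreover have "sqrt N * (D * (M2\<^sup>2 + 2 * L\<^sup>2) / c + \<Theta> * (D * M2\<^sup>2 / c))
      = sqrt N * (D * (M2\<^sup>2 + L\<^sup>2) / c) + sqrt N * (D * L\<^sup>2 / c + \<Theta> * (D * M2\<^sup>2 / c))"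
    using c(1) by (simp add: field_simps)
  ultimately show ?thesis using first by linarith
qed

text \<open>The setting of Proposition 1 (Assumptions 1 and 2); the light-tail assumptions enter as
  hypotheses of the final bounds.\<close>

locale rsa_setting = prob_space M for M :: "'w measure" +
  fixes S :: "'b measure" and P :: "'b measure" and \<xi> :: "nat \<Rightarrow> 'w \<Rightarrow> 'b"
    and X :: "(real^'n) set" and g :: "real^'n \<Rightarrow> 'b \<Rightarrow> real" and G :: "real^'n \<Rightarrow> 'b \<Rightarrow> real^'n"
    and f :: "real^'n \<Rightarrow> real" and x1 xstar :: "real^'n" and L M1 M2 :: real and N :: nat
  assumes \<xi>_meas: "\<And>t. t \<ge> 1 \<Longrightarrow> \<xi> t \<in> measurable M S"
    and \<xi>_distr: "\<And>t. t \<ge> 1 \<Longrightarrow> distr M S (\<xi> t) = P"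
    and \<xi>_indep: "indep_vars (\<lambda>_. S) \<xi> {1..}"
    and X_nonempty: "X \<noteq> {}" and X_closed: "closed X" and X_bounded: "bounded X"
    and X_convex: "convex X"
    and g_meas: "(\<lambda>(x, s). g x s) \<in> borel_measurable (borel \<Otimes>\<^sub>M S)"
    and G_meas: "(\<lambda>(x, s). G x s) \<in> borel_measurable (borel \<Otimes>\<^sub>M S)"
    and g_int: "\<And>x. x \<in> X \<Longrightarrow> integrable P (g x)"
    and G_int: "\<And>x. x \<in> X \<Longrightarrow> integrable P (G x)"
    and f_def: "\<And>x. x \<in> X \<Longrightarrow> f x = (\<integral>s. g x s \<partial>P)"
    and xstar_in: "xstar \<in> X" and xstar_min: "\<And>x. x \<in> X \<Longrightarrow> f xstar \<le> f x"
    and x1_in: "x1 \<in> X" and N_pos: "N \<ge> 1" and M1_pos: "M1 > 0" and M2_pos: "M2 > 0"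
    and mean_grad_bound: "\<And>x. x \<in> X \<Longrightarrow> norm (\<integral>s. G x s \<partial>P) \<le> L"
    and mean_grad_subgrad: "\<And>x. x \<in> X \<Longrightarrow> (\<forall>y\<in>X. f y \<ge> f x + (\<integral>s. G x s \<partial>P) \<bullet> (y - x))"
begin

definition DX :: real where
  "DX = (SUP x\<in>X. norm (x - x1))"

definition \<gamma> :: real where
  "\<gamma> = DX / (sqrt (2 * (M2\<^sup>2 + L\<^sup>2)) * sqrt (real N))"

definition gN :: "'w \<Rightarrow> real" where
  "gN \<omega> = (1 / real N) * (\<Sum>\<tau>=1..N. g (rsa X G \<gamma> x1 \<xi> \<omega> (\<tau> - 1)) (\<xi> \<tau> \<omega>))"

definition K1 :: real where
  "K1 = DX * (M2\<^sup>2 + 2 * L\<^sup>2) / sqrt (2 * (M2\<^sup>2 + L\<^sup>2))"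

definition K2 :: real where
  "K2 = DX * M2\<^sup>2 / sqrt (2 * (M2\<^sup>2 + L\<^sup>2)) + 2 * DX * M2 + M1"

definition fbar :: "real^'n \<Rightarrow> real" where
  "fbar x = (\<integral>s. g x s \<partial>P)"

definition Gbar :: "real^'n \<Rightarrow> real^'n" where
  "Gbar x = (\<integral>s. G x s \<partial>P)"

definition \<delta> :: "real^'n \<Rightarrow> 'b \<Rightarrow> real" where
  "\<delta> x s = g x s - fbar x"

definition \<Delta> :: "real^'n \<Rightarrow> 'b \<Rightarrow> real^'n" where
  "\<Delta> x s = G x s - Gbar x"

sublocale rsa_sampling M S P \<xi> X G x1 \<gamma>
  by unfold_locales (use \<xi>_meas \<xi>_distr \<xi>_indep X_closed X_convex X_nonempty x1_in G_meas in auto)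

text \<open>\<open>DX\<close> is the radius of \<open>X\<close> around \<open>x1\<close>; it is finite since \<open>X\<close> is bounded.\<close>

lemma DX_bound: "x \<in> X \<Longrightarrow> norm (x - x1) \<le> DX"
proof -
  obtain B where B: "\<forall>x\<in>X. norm x \<le> B" using X_bounded by (auto simp: bounded_iff)
  have "bdd_above ((\<lambda>x. norm (x - x1)) ` X)"
  proof (rule bdd_aboveI2)
    fix x assume "x \<in> X"
    then show "norm (x - x1) \<le> B + norm x1" using B norm_triangle_ineq4[of x x1] by fastforce
  qed
  then show "x \<in> X \<Longrightarrow> norm (x - x1) \<le> DX" unfolding DX_def by (rule cSUP_upper2) auto
qed

lemma DX_nonneg: "DX \<ge> 0"
  using DX_bound[OF x1_in] by simp

lemma K_bounds: "K1 \<ge> 0" "K2 \<ge> M1"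
  using DX_nonneg M2_pos by (simp_all add: K1_def K2_def)

lemma f_eq_fbar: "x \<in> X \<Longrightarrow> f x = fbar x"
  by (simp add: f_def fbar_def)

lemma g_measurable[measurable]: "(\<lambda>z. g (fst z) (snd z)) \<in> borel_measurable (borel \<Otimes>\<^sub>M S)"
  using g_meas by (simp add: case_prod_beta')

lemma G_measurable[measurable]: "(\<lambda>z. G (fst z) (snd z)) \<in> borel_measurable (borel \<Otimes>\<^sub>M S)"
  using G_meas by (simp add: case_prod_beta')

lemma fbar_measurable[measurable]: "fbar \<in> borel_measurable borel"
proof -
  have "(\<lambda>(x, s). g x s) \<in> borel_measurable (borel \<Otimes>\<^sub>M P)"
    using g_meas by (subst measurable_cong_sets[OF sets_pair_measure_cong[OF refl sets_P] refl])
  from P.borel_measurable_lebesgue_integral[OF this] show ?thesis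
    by (simp add: fbar_def[abs_def])
qed

lemma Gbar_measurable[measurable]: "Gbar \<in> borel_measurable borel"
proof -
  have "(\<lambda>(x, s). G x s) \<in> borel_measurable (borel \<Otimes>\<^sub>M P)"
    using G_meas by (subst measurable_cong_sets[OF sets_pair_measure_cong[OF refl sets_P] refl])
  from P.borel_measurable_lebesgue_integral[OF this] show ?thesis
    by (simp add: Gbar_def[abs_def])
qed

lemma \<delta>_measurable[measurable]: "(\<lambda>z. \<delta> (fst z) (snd z)) \<in> borel_measurable (borel \<Otimes>\<^sub>M S)"
  unfolding \<delta>_def by measurable

lemma \<Delta>_measurable[measurable]: "(\<lambda>z. \<Delta> (fst z) (snd z)) \<in> borel_measurable (borel \<Otimes>\<^sub>M S)"
  unfolding \<Delta>_def by measurable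


lemma value_noise_tail:
  assumes light: "\<And>x. x \<in> X \<Longrightarrow> (\<integral>\<^sup>+s. ennreal (exp ((g x s - f x)\<^sup>2 / M1\<^sup>2)) \<partial>P) \<le> ennreal (exp 1)"
    and c: "c\<^sup>2 = 1" and \<Theta>: "\<Theta> > 0"
  shows "prob {\<omega> \<in> space M. path_sum (\<lambda>x s. c * \<delta> x s) N \<omega> > \<Theta> * M1 * sqrt N} \<le> exp (- \<Theta>\<^sup>2/4)"
proof (rule path_sum_subgaussian_tail)
  show "(\<lambda>(x, s). c * \<delta> x s) \<in> borel_measurable (borel \<Otimes>\<^sub>M S)" by measurable
  fix x l assume x: "x \<in> X"
  have int: "integrable P (\<delta> x)" using g_int[OF x] by (simp add: \<delta>_def[abs_def])
  have "(\<integral>\<^sup>+s. ennreal (exp ((l * c) * \<delta> x s)) \<partial>P) \<le> ennreal (exp ((l * c)\<^sup>2 * M1\<^sup>2))"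
  proof (rule P.light_tail_mgf)
    show "\<delta> x \<in> borel_measurable P" "integrable P (\<delta> x)" using int by auto
    show "(\<integral>s. \<delta> x s \<partial>P) = 0" using g_int[OF x] by (simp add: \<delta>_def fbar_def P.prob_space)
    show "(\<integral>\<^sup>+s. ennreal (exp ((\<delta> x s)\<^sup>2 / M1\<^sup>2)) \<partial>P) \<le> ennreal (exp 1)"
      using light[OF x] x by (simp add: \<delta>_def f_eq_fbar)
  qed (rule M1_pos)
  then show "(\<integral>\<^sup>+s. ennreal (exp (l * (c * \<delta> x s))) \<partial>P) \<le> ennreal (exp (l\<^sup>2 * M1\<^sup>2))"
    using c by (simp add: power_mult_distrib mult.assoc)
qed (use M1_pos \<Theta> N_pos in auto)

lemma direction_noise_tail:
  assumes light: "\<And>x. x \<in> X \<Longrightarrow>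
      (\<integral>\<^sup>+s. ennreal (exp ((norm (G x s - (\<integral>s. G x s \<partial>P)))\<^sup>2 / M2\<^sup>2)) \<partial>P) \<le> ennreal (exp 1)"
    and \<Theta>: "\<Theta> > 0"
  shows "prob {\<omega> \<in> space M. path_sum (\<lambda>x s. \<Delta> x s \<bullet> (xstar - x)) N \<omega> > \<Theta> * (2 * DX * M2) * sqrt N}
           \<le> exp (- \<Theta>\<^sup>2/4)"
proof (cases "DX = 0")
  case True
  have singleton: "x = xstar" if "x \<in> X" for x
    using DX_bound[OF that] DX_bound[OF xstar_in] True by simp
  have "rsa X G \<gamma> x1 \<xi> \<omega> k = xstar" for \<omega> k
    using singleton[OF iterate_in_X] .
  then have "path_sum (\<lambda>x s. \<Delta> x s \<bullet> (xstar - x)) N \<omega> = 0" for \<omega>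
    by (simp add: path_sum_def)
  then show ?thesis using True by simp
next
  case False
  then have DX_pos: "DX > 0" using DX_nonneg by simp
  then have \<sigma>: "2 * DX * M2 > 0" using M2_pos by simp
  show ?thesis
  proof (rule path_sum_subgaussian_tail[OF _ _ \<sigma> \<Theta> N_pos])
    show "(\<lambda>(x, s). \<Delta> x s \<bullet> (xstar - x)) \<in> borel_measurable (borel \<Otimes>\<^sub>M S)" by measurable
    fix x l assume x: "x \<in> X"
    have int: "integrable P (\<Delta> x)" using G_int[OF x] by (simp add: \<Delta>_def[abs_def])
    have near: "norm (xstar - x) \<le> 2 * DX"
      using norm_triangle_ineq4[of "xstar - x1" "x - x1"] DX_bound[OF xstar_in] DX_bound[OF x] by simp
    have ratio: "(\<Delta> x s \<bullet> (xstar - x))\<^sup>2 / (2 * DX * M2)\<^sup>2 \<le> (norm (\<Delta> x s))\<^sup>2 / M2\<^sup>2" for s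
    proof -
      have "\<bar>\<Delta> x s \<bullet> (xstar - x)\<bar> \<le> norm (\<Delta> x s) * (2 * DX)"
        using Cauchy_Schwarz_ineq2[of "\<Delta> x s" "xstar - x"] near
        by (meson mult_left_mono norm_ge_zero order.trans)
      then have "(\<Delta> x s \<bullet> (xstar - x))\<^sup>2 \<le> (norm (\<Delta> x s) * (2 * DX))\<^sup>2"
        by (metis abs_ge_zero power2_abs power_mono)
      then show ?thesis
        using DX_pos M2_pos by (simp add: power_mult_distrib field_simps)
    qed
    show "(\<integral>\<^sup>+s. ennreal (exp (l * (\<Delta> x s \<bullet> (xstar - x)))) \<partial>P) \<le> ennreal (exp (l\<^sup>2 * (2 * DX * M2)\<^sup>2))"
    proof (rule P.light_tail_mgf[OF _ _ _ \<sigma>])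
      show "(\<lambda>s. \<Delta> x s \<bullet> (xstar - x)) \<in> borel_measurable P"
        "integrable P (\<lambda>s. \<Delta> x s \<bullet> (xstar - x))" using int by auto
      show "(\<integral>s. \<Delta> x s \<bullet> (xstar - x) \<partial>P) = 0"
        using int G_int[OF x] by (simp add: \<Delta>_def Gbar_def P.prob_space)
      have "(\<integral>\<^sup>+s. ennreal (exp ((\<Delta> x s \<bullet> (xstar - x))\<^sup>2 / (2 * DX * M2)\<^sup>2)) \<partial>P)
          \<le> (\<integral>\<^sup>+s. ennreal (exp ((norm (\<Delta> x s))\<^sup>2 / M2\<^sup>2)) \<partial>P)"
        using ratio by (intro nn_integral_mono ennreal_leI) simp
      also have "\<dots> \<le> ennreal (exp 1)" using light[OF x] by (simp add: \<Delta>_def Gbar_def)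
      finally show "(\<integral>\<^sup>+s. ennreal (exp ((\<Delta> x s \<bullet> (xstar - x))\<^sup>2 / (2 * DX * M2)\<^sup>2)) \<partial>P)
          \<le> ennreal (exp 1)" .
    qed
  qed
qed

lemma gradient_noise_light_tail:
  fixes \<Theta> :: real
  assumes light: "\<And>x. x \<in> X \<Longrightarrow>
      (\<integral>\<^sup>+s. ennreal (exp ((norm (G x s - (\<integral>s. G x s \<partial>P)))\<^sup>2 / M2\<^sup>2)) \<partial>P) \<le> ennreal (exp 1)"
  shows "prob {\<omega> \<in> space M. path_sum (\<lambda>x s. (norm (\<Delta> x s))\<^sup>2 / M2\<^sup>2) N \<omega> > N * \<Theta>}
           \<le> exp 1 * exp (- \<Theta>)"
proof (rule path_sum_light_tail[OF _ _ N_pos])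
  show "(\<lambda>(x, s). (norm (\<Delta> x s))\<^sup>2 / M2\<^sup>2) \<in> borel_measurable (borel \<Otimes>\<^sub>M S)" by measurable
qed (use light in \<open>simp add: \<Delta>_def Gbar_def\<close>)

lemma gradient_noise_bounded_tail:
  fixes \<Theta> :: real
  assumes bounded: "\<And>x. x \<in> X \<Longrightarrow> AE s in P. norm (G x s - (\<integral>s. G x s \<partial>P)) \<le> M2"
    and \<Theta>: "\<Theta> > 1"
  shows "prob {\<omega> \<in> space M. path_sum (\<lambda>x s. (norm (\<Delta> x s))\<^sup>2 / M2\<^sup>2) N \<omega> > N * \<Theta>} = 0"
proof (rule path_sum_bounded_tail[OF _ _ N_pos \<Theta>])
  show "(\<lambda>(x, s). (norm (\<Delta> x s))\<^sup>2 / M2\<^sup>2) \<in> borel_measurable (borel \<Otimes>\<^sub>M S)" by measurable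
  fix x assume "x \<in> X"
  from bounded[OF this] show "AE s in P. (norm (\<Delta> x s))\<^sup>2 / M2\<^sup>2 \<le> 1"
  proof eventually_elim
    case (elim s)
    then have "(norm (\<Delta> x s))\<^sup>2 \<le> M2\<^sup>2" by (intro power_mono) (auto simp: \<Delta>_def Gbar_def)
    then show ?case using M2_pos by simp
  qed
qed

lemma bounded_gradient_noise_light:
  assumes bounded: "x \<in> X \<Longrightarrow> AE s in P. norm (G x s - (\<integral>s. G x s \<partial>P)) \<le> M2" and x: "x \<in> X"
  shows "(\<integral>\<^sup>+s. ennreal (exp ((norm (G x s - (\<integral>s. G x s \<partial>P)))\<^sup>2 / M2\<^sup>2)) \<partial>P) \<le> ennreal (exp 1)"
proof -
  have "(\<integral>\<^sup>+s. ennreal (exp ((norm (G x s - (\<integral>s. G x s \<partial>P)))\<^sup>2 / M2\<^sup>2)) \<partial>P) \<le> (\<integral>\<^sup>+s. ennreal (exp 1) \<partial>P)"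
    using bounded[OF x]
  proof (intro nn_integral_mono_AE, eventually_elim)
    case (elim s)
    then have "(norm (G x s - (\<integral>s. G x s \<partial>P)))\<^sup>2 \<le> M2\<^sup>2" by (intro power_mono) auto
    then show ?case using M2_pos by simp
  qed
  then show ?thesis by (simp add: P.emeasure_space_1)
qed


lemma optimality_gap_bound:
  fixes \<Theta> :: real
  assumes \<Theta>: "\<Theta> \<ge> 0"
    and direction: "path_sum (\<lambda>x s. \<Delta> x s \<bullet> (xstar - x)) N \<omega> \<le> \<Theta> * (2 * DX * M2) * sqrt N"
    and noise: "path_sum (\<lambda>x s. (norm (\<Delta> x s))\<^sup>2 / M2\<^sup>2) N \<omega> \<le> N * \<Theta>"
  shows "(\<Sum>k<N. f (rsa X G \<gamma> x1 \<xi> \<omega> k) - f xstar) \<le> sqrt N * (K1 + \<Theta> * (K2 - M1))"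
proof (cases "DX = 0")
  case True
  have "rsa X G \<gamma> x1 \<xi> \<omega> k = xstar" for k
    using DX_bound[OF iterate_in_X] DX_bound[OF xstar_in] True by simp
  then show ?thesis using K_bounds \<Theta> by simp
next
  case False
  let ?y = "rsa X G \<gamma> x1 \<xi> \<omega>" and ?c = "sqrt (2 * (M2\<^sup>2 + L\<^sup>2))"
  have DX_pos: "DX > 0" using False DX_nonneg by simp
  have \<gamma>_pos: "\<gamma> > 0" using DX_pos M2_pos N_pos by (simp add: \<gamma>_def add_pos_nonneg)
  have "(\<Sum>k<N. f (?y k) - f xstar) \<le> DX\<^sup>2 / (2 * \<gamma>) + \<gamma> * N * L\<^sup>2
      + \<gamma> * (\<Sum>k<N. (norm (G (?y k) (\<xi> (Suc k) \<omega>) - Gbar (?y k)))\<^sup>2)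
      + (\<Sum>k<N. (G (?y k) (\<xi> (Suc k) \<omega>) - Gbar (?y k)) \<bullet> (xstar - ?y k))"
  proof (rule projected_subgradient_gap[OF X_closed X_convex X_nonempty xstar_in \<gamma>_pos])
    show "\<And>x. x \<in> X \<Longrightarrow> norm (x - ?y 0) \<le> DX" using DX_bound by simp
    show "\<And>x. x \<in> X \<Longrightarrow> f xstar \<ge> f x + Gbar x \<bullet> (xstar - x)"
      using mean_grad_subgrad xstar_in by (simp add: Gbar_def)
    show "\<And>x. x \<in> X \<Longrightarrow> norm (Gbar x) \<le> L" using mean_grad_bound by (simp add: Gbar_def)
  qed (simp_all add: x1_in)
  also have "\<dots> \<le> DX\<^sup>2 / (2 * \<gamma>) + \<gamma> * N * L\<^sup>2 + \<gamma> * (N * \<Theta> * M2\<^sup>2) + \<Theta> * (2 * DX * M2) * sqrt N"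
  proof -
    have "(\<Sum>k<N. (norm (G (?y k) (\<xi> (Suc k) \<omega>) - Gbar (?y k)))\<^sup>2)
        = M2\<^sup>2 * path_sum (\<lambda>x s. (norm (\<Delta> x s))\<^sup>2 / M2\<^sup>2) N \<omega>"
      using M2_pos by (simp add: path_sum_lessThan \<Delta>_def sum_distrib_left)
    also have "\<dots> \<le> N * \<Theta> * M2\<^sup>2" using noise M2_pos by (simp add: mult.commute)
    finally have "\<gamma> * (\<Sum>k<N. (norm (G (?y k) (\<xi> (Suc k) \<omega>) - Gbar (?y k)))\<^sup>2) \<le> \<gamma> * (N * \<Theta> * M2\<^sup>2)"
      using \<gamma>_pos by (intro mult_left_mono) auto
    then show ?thesis
      using direction by (simp add: path_sum_lessThan \<Delta>_def)
  qed
  also have "\<dots> = sqrt N * (K1 + \<Theta> * (K2 - M1))"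
    unfolding \<gamma>_def stepsize_balance[OF DX_pos M2_pos N_pos] K1_def K2_def
    by (simp add: algebra_simps)
  finally show ?thesis .
qed

lemma error_on_good_event:
  fixes \<Theta> :: real
  assumes \<Theta>: "\<Theta> > 0"
    and value_up: "path_sum \<delta> N \<omega> \<le> \<Theta> * M1 * sqrt N"
    and value_down: "path_sum (\<lambda>x s. - \<delta> x s) N \<omega> \<le> \<Theta> * M1 * sqrt N"
    and direction: "path_sum (\<lambda>x s. \<Delta> x s \<bullet> (xstar - x)) N \<omega> \<le> \<Theta> * (2 * DX * M2) * sqrt N"
    and noise: "path_sum (\<lambda>x s. (norm (\<Delta> x s))\<^sup>2 / M2\<^sup>2) N \<omega> \<le> N * \<Theta>"
  shows "\<bar>gN \<omega> - f xstar\<bar> \<le> (K1 + \<Theta> * K2) / sqrt N"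
proof -
  let ?y = "rsa X G \<gamma> x1 \<xi> \<omega>"
  define Sd where "Sd = (\<Sum>k<N. g (?y k) (\<xi> (Suc k) \<omega>) - f (?y k))"
  define Sf where "Sf = (\<Sum>k<N. f (?y k) - f xstar)"
  have N: "real N > 0" using N_pos by simp
  have Sd: "Sd = path_sum \<delta> N \<omega>"
    by (simp add: Sd_def path_sum_lessThan \<delta>_def f_eq_fbar iterate_in_X)
  have "path_sum (\<lambda>x s. - \<delta> x s) N \<omega> = - Sd"
    unfolding Sd using path_sum_scale[of "- 1" \<delta> N \<omega>] by simp
  then have Sd_bound: "\<bar>Sd\<bar> \<le> \<Theta> * M1 * sqrt N" using value_up value_down Sd by linarith
  have Sf_bound: "0 \<le> Sf" "Sf \<le> sqrt N * (K1 + \<Theta> * (K2 - M1))"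
    unfolding Sf_def using \<Theta> direction noise
    by (auto intro: sum_nonneg optimality_gap_bound simp: xstar_min iterate_in_X)
  have gap_eq: "gN \<omega> - f xstar = (Sd + Sf) / N"
  proof -
    have "Sd + Sf = (\<Sum>k<N. g (?y k) (\<xi> (Suc k) \<omega>)) - N * f xstar"
      unfolding Sd_def Sf_def by (simp add: sum.distrib[symmetric] sum_subtractf)
    moreover have "(\<Sum>\<tau>=1..N. g (?y (\<tau> - 1)) (\<xi> \<tau> \<omega>)) = (\<Sum>k<N. g (?y k) (\<xi> (Suc k) \<omega>))"
      using sum_bounds_lt_plus1[of "\<lambda>\<tau>. g (?y (\<tau> - 1)) (\<xi> \<tau> \<omega>)" N] by simp
    ultimately show ?thesis using N by (simp add: gN_def field_simps)
  qed
  have "\<bar>Sd + Sf\<bar> \<le> sqrt N * (K1 + \<Theta> * K2)"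
    using Sd_bound Sf_bound K_bounds \<Theta> N
    by (simp add: abs_le_iff algebra_simps)
  then have "\<bar>Sd + Sf\<bar> / N \<le> sqrt N * (K1 + \<Theta> * K2) / N"
    using N by (simp add: divide_right_mono)
  also have "\<dots> = sqrt N * (K1 + \<Theta> * K2) / (sqrt N * sqrt N)" by simp
  also have "\<dots> = (K1 + \<Theta> * K2) / sqrt N" using N by (simp del: real_sqrt_mult_self)
  finally show ?thesis
    using N by (simp add: gap_eq abs_divide)
qed


lemma deviation_prob_le:
  fixes \<Theta> :: real
  assumes \<Theta>: "\<Theta> > 0"
  shows "prob {\<omega> \<in> space M. \<bar>gN \<omega> - f xstar\<bar> > (K1 + \<Theta> * K2) / sqrt N}
    \<le> prob {\<omega> \<in> space M. path_sum \<delta> N \<omega> > \<Theta> * M1 * sqrt N}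
      + prob {\<omega> \<in> space M. path_sum (\<lambda>x s. - \<delta> x s) N \<omega> > \<Theta> * M1 * sqrt N}
      + prob {\<omega> \<in> space M. path_sum (\<lambda>x s. \<Delta> x s \<bullet> (xstar - x)) N \<omega> > \<Theta> * (2 * DX * M2) * sqrt N}
      + prob {\<omega> \<in> space M. path_sum (\<lambda>x s. (norm (\<Delta> x s))\<^sup>2 / M2\<^sup>2) N \<omega> > N * \<Theta>}"
    (is "prob ?bad \<le> prob ?E1 + prob ?E2 + prob ?E3 + prob ?E4")
proof -
  have events: "?E1 \<in> events" "?E2 \<in> events" "?E3 \<in> events" "?E4 \<in> events"
    by (intro path_sum_event; measurable)+
  have "?bad \<subseteq> ?E1 \<union> ?E2 \<union> ?E3 \<union> ?E4"
  proof
    fix \<omega> assume bad: "\<omega> \<in> ?bad"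
    show "\<omega> \<in> ?E1 \<union> ?E2 \<union> ?E3 \<union> ?E4"
    proof (rule ccontr)
      assume "\<omega> \<notin> ?E1 \<union> ?E2 \<union> ?E3 \<union> ?E4"
      then have "\<bar>gN \<omega> - f xstar\<bar> \<le> (K1 + \<Theta> * K2) / sqrt N"
        using bad by (intro error_on_good_event \<Theta>) auto
      then show False using bad by simp
    qed
  qed
  then have "prob ?bad \<le> prob (?E1 \<union> ?E2 \<union> ?E3 \<union> ?E4)"
    using events by (intro finite_measure_mono) auto
  also have "\<dots> \<le> prob ?E1 + prob ?E2 + prob ?E3 + prob ?E4"
    using events by (intro order.trans[OF measure_Un_le] add_mono order.refl sets.Un)
  finally show ?thesis .
qed

lemma tail_bound_light:
  fixes \<Theta> :: real
  assumes light_value: "\<And>x. x \<in> X \<Longrightarrow> (\<integral>\<^sup>+s. ennreal (exp ((g x s - f x)\<^sup>2 / M1\<^sup>2)) \<partial>P) \<le> ennreal (exp 1)"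
    and light_grad: "\<And>x. x \<in> X \<Longrightarrow>
      (\<integral>\<^sup>+s. ennreal (exp ((norm (G x s - (\<integral>s. G x s \<partial>P)))\<^sup>2 / M2\<^sup>2)) \<partial>P) \<le> ennreal (exp 1)"
    and \<Theta>: "\<Theta> > 0"
  shows "prob {\<omega> \<in> space M. \<bar>gN \<omega> - f xstar\<bar> > (K1 + \<Theta> * K2) / sqrt N} \<le> 4 * exp 1 * exp (- \<Theta>)"
proof -
  have "prob {\<omega> \<in> space M. \<bar>gN \<omega> - f xstar\<bar> > (K1 + \<Theta> * K2) / sqrt N}
      \<le> exp (- \<Theta>\<^sup>2/4) + exp (- \<Theta>\<^sup>2/4) + exp (- \<Theta>\<^sup>2/4) + exp 1 * exp (- \<Theta>)"
    using deviation_prob_le[OF \<Theta>] value_noise_tail[OF light_value, of 1 \<Theta>]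
      value_noise_tail[OF light_value, of "- 1" \<Theta>] direction_noise_tail[OF light_grad \<Theta>]
      gradient_noise_light_tail[OF light_grad, of \<Theta>] \<Theta>
    by simp
  then show ?thesis using exp_neg_square_quarter_le[of \<Theta>] by linarith
qed

text \<open>Part (ii): bounded gradient noise (Assumption 5); for \<open>\<Theta> \<le> 1\<close> the bound exceeds \<open>1\<close>.\<close>

lemma tail_bound_bounded:
  fixes \<Theta> :: real
  assumes light_value: "\<And>x. x \<in> X \<Longrightarrow> (\<integral>\<^sup>+s. ennreal (exp ((g x s - f x)\<^sup>2 / M1\<^sup>2)) \<partial>P) \<le> ennreal (exp 1)"
    and bounded: "\<And>x. x \<in> X \<Longrightarrow> AE s in P. norm (G x s - (\<integral>s. G x s \<partial>P)) \<le> M2"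
    and \<Theta>: "\<Theta> > 0"
  shows "prob {\<omega> \<in> space M. \<bar>gN \<omega> - f xstar\<bar> > (K1 + \<Theta> * K2) / sqrt N} \<le> (3 + exp 1) * exp (- \<Theta>\<^sup>2 / 4)"
proof (cases "\<Theta> > 1")
  case True
  have "prob {\<omega> \<in> space M. \<bar>gN \<omega> - f xstar\<bar> > (K1 + \<Theta> * K2) / sqrt N}
      \<le> exp (- \<Theta>\<^sup>2/4) + exp (- \<Theta>\<^sup>2/4) + exp (- \<Theta>\<^sup>2/4) + 0"
    using deviation_prob_le[OF \<Theta>] value_noise_tail[OF light_value, of 1 \<Theta>]
      value_noise_tail[OF light_value, of "- 1" \<Theta>]
      direction_noise_tail[OF bounded_gradient_noise_light[OF bounded] \<Theta>]
      gradient_noise_bounded_tail[OF bounded True] \<Theta>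
    by simp
  also have "\<dots> \<le> (3 + exp 1) * exp (- \<Theta>\<^sup>2 / 4)"
    by (simp add: distrib_right)
  finally show ?thesis .
next
  case False
  then have small: "exp (-1) \<le> exp (- \<Theta>\<^sup>2 / 4)"
    using \<Theta> power_mono[of \<Theta> 1 2] by simp
  have "(3 + exp 1) * exp (-1) = 3 * exp (-1) + (1::real)"
    by (simp add: distrib_right flip: exp_add)
  then have "1 \<le> (3 + exp 1) * exp (-1::real)" by simp
  also have "\<dots> \<le> (3 + exp 1) * exp (- \<Theta>\<^sup>2 / 4)"
    using small by (intro mult_left_mono) auto
  finally show ?thesis using prob_le_1 order.trans by blast
qed

end

theorem proposition1:
  fixes M :: "'w measure" and S :: "'b measure" and P :: "'b measure"
    and \<xi> :: "nat \<Rightarrow> 'w \<Rightarrow> 'b"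
    and X :: "(real^'n) set"
    and g :: "real^'n \<Rightarrow> 'b \<Rightarrow> real" and G :: "real^'n \<Rightarrow> 'b \<Rightarrow> real^'n"
    and f :: "real^'n \<Rightarrow> real"
    and x1 xstar :: "real^'n"
    and L M1 M2 :: real and N :: nat
  assumes M: "prob_space M"
    and \<xi>_meas: "\<And>t. t \<ge> 1 \<Longrightarrow> \<xi> t \<in> measurable M S"
    and \<xi>_distr: "\<And>t. t \<ge> 1 \<Longrightarrow> distr M S (\<xi> t) = P"
    and \<xi>_indep: "prob_space.indep_vars M (\<lambda>_. S) \<xi> {1..}"
    and X: "X \<noteq> {}" "closed X" "bounded X" "convex X"
    and g_meas: "(\<lambda>(x, s). g x s) \<in> borel_measurable (borel \<Otimes>\<^sub>M S)"
    and G_meas: "(\<lambda>(x, s). G x s) \<in> borel_measurable (borel \<Otimes>\<^sub>M S)"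
    and g_convex: "\<And>s. s \<in> space S \<Longrightarrow> convex_on UNIV (\<lambda>x. g x s)"
    and G_subgrad: "\<And>x s. s \<in> space S \<Longrightarrow> is_subgradient (\<lambda>y. g y s) x (G x s)"
    and g_int: "\<And>x. x \<in> X \<Longrightarrow> integrable P (g x)"
    and G_int: "\<And>x. x \<in> X \<Longrightarrow> integrable P (G x)"
    and f_def: "\<And>x. x \<in> X \<Longrightarrow> f x = (\<integral>s. g x s \<partial>P)"
    and f_convex: "convex_on X f"
    and f_lip: "\<exists>C. C-lipschitz_on X f"
    and xstar: "xstar \<in> X" "\<And>x. x \<in> X \<Longrightarrow> f xstar \<le> f x"
    and x1: "x1 \<in> X"
    and N: "N \<ge> 1"
    and M12: "M1 > 0" "M2 > 0"
    \<comment> \<open>Assumption 1\<close>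
    and A1: "\<And>x. x \<in> X \<Longrightarrow> norm (\<integral>s. G x s \<partial>P) \<le> L"
    \<comment> \<open>Assumption 2 (second part; the first part is f_def)\<close>
    and A2: "\<And>x. x \<in> X \<Longrightarrow> (\<forall>y\<in>X. f y \<ge> f x + (\<integral>s. G x s \<partial>P) \<bullet> (y - x))"
    \<comment> \<open>Assumption 3\<close>
    and A3: "\<And>x. x \<in> X \<Longrightarrow> (\<integral>\<^sup>+ s. ennreal ((g x s - f x)\<^sup>2) \<partial>P) \<le> ennreal (M1\<^sup>2)"
            "\<And>x. x \<in> X \<Longrightarrow> (\<integral>\<^sup>+ s. ennreal ((norm (G x s - (\<integral>s. G x s \<partial>P)))\<^sup>2) \<partial>P) \<le> ennreal (M2\<^sup>2)"
  shows "let DX = (SUP x\<in>X. norm (x - x1));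
             \<gamma> = DX / (sqrt (2 * (M2\<^sup>2 + L\<^sup>2)) * sqrt (real N));
             xs = rsa X G \<gamma> x1 \<xi>;
             gN = (\<lambda>\<omega>. (1 / real N) * (\<Sum>\<tau>=1..N. g (xs \<omega> (\<tau> - 1)) (\<xi> \<tau> \<omega>)));
             K1 = DX * (M2\<^sup>2 + 2 * L\<^sup>2) / sqrt (2 * (M2\<^sup>2 + L\<^sup>2));
             K2 = DX * M2\<^sup>2 / sqrt (2 * (M2\<^sup>2 + L\<^sup>2)) + 2 * DX * M2 + M1
         in ((\<forall>x\<in>X. (\<integral>\<^sup>+ s. ennreal (exp ((g x s - f x)\<^sup>2 / M1\<^sup>2)) \<partial>P) \<le> ennreal (exp 1)
                   \<and> (\<integral>\<^sup>+ s. ennreal (exp ((norm (G x s - (\<integral>s. G x s \<partial>P)))\<^sup>2 / M2\<^sup>2)) \<partial>P) \<le> ennreal (exp 1))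
             \<longrightarrow> (\<forall>\<Theta>>0. measure M {\<omega> \<in> space M. \<bar>gN \<omega> - f xstar\<bar> > (K1 + \<Theta> * K2) / sqrt (real N)}
                          \<le> 4 * exp 1 * exp (- \<Theta>)))
          \<and> ((\<forall>x\<in>X. (\<integral>\<^sup>+ s. ennreal (exp ((g x s - f x)\<^sup>2 / M1\<^sup>2)) \<partial>P) \<le> ennreal (exp 1)
                   \<and> (AE s in P. norm (G x s - (\<integral>s. G x s \<partial>P)) \<le> M2))
             \<longrightarrow> (\<forall>\<Theta>>0. measure M {\<omega> \<in> space M. \<bar>gN \<omega> - f xstar\<bar> > (K1 + \<Theta> * K2) / sqrt (real N)}
                          \<le> (3 + exp 1) * exp (- \<Theta>\<^sup>2 / 4)))"
proof -
  interpret rsa_setting M S P \<xi> X g G f x1 xstar L M1 M2 N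
    by (intro rsa_setting.intro rsa_setting_axioms.intro) (use assms in auto)
  show ?thesis
    unfolding Let_def DX_def[symmetric] \<gamma>_def[symmetric] K1_def[symmetric] K2_def[symmetric]
      gN_def[symmetric]
    using tail_bound_light tail_bound_bounded by blast
qed

end
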